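(* Let $G$ be an SE-graph and let $P,Q$ be standard, weakly intersecting directed paths in $G$ with $\alpha(t_P)=\alpha(t_Q)$, and with either $\alpha(s_P)\ne\alpha(s_Q)$ or $\alpha(s_P)=\alpha(s_Q)=0$. Suppose $P$ is lower than $Q$. Then $w(P)w(Q)=q\,w(Q)w(P)$.
   Context: Fix a field $\mathbb K$, $q\in\mathbb K^\ast$. An SE-graph is a finite directed graph $G=(V,E)$ embedded in the plane (planar) whose edges are horizontal directed to the right (H-edges) or vertical directed downward (V-edges), with sources $r_1,\dots,r_m$ on a vertical line in this order upward and sinks $c_1,\dots,c_n$ on a horizontal line in order left to right, sources incident only to H-edges and sinks only to V-edges, every vertex lying on a directed source-to-sink path. Here the sources lie on the ray $\{0\}\times\mathbb R_{\ge0}$ and the sinks on the ray $\mathbb R_{\ge 0}\times\{0\}$; a point $v$ has coordinates $(\alpha(v),\beta(v))$. Standing convention: two vertices have the same first (resp. second) coordinate if and only if they lie on a common vertical (resp. horizontal) directed path of $G$. Let $W$ be the inner vertices; $\mathcal L_G$ is the $\mathbb K$-algebra of Laurent polynomials in $W$ with, for distinct $u,v\in W$: $uv=qvu$ if there is a directed horizontal path from $u$ to $v$; $vu=quv$ if there is a directed vertical path from $u$ to $v$; $uv=vu$ otherwise. Edge weights: $w(e)=v$ if $e=(u,v)$ with $u$ a source; $w(e)=u^{-1}v$ for an H-edge $e=(u,v)$ with $u,v\in W$; $w(e)=1$ for V-edges. The weight of a directed path is the ordered product of its edge weights. For a directed path $P$, $s_P,t_P$ are its first and last vertices; $P$ is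 standard if it has at least one H-edge. $P,Q$ are weakly intersecting if $P\cap Q=\{s_P,t_P\}\cap\{s_Q,t_Q\}$. For weakly intersecting $P,Q$, $P$ is lower than $Q$ if there are points $x\in P$, $y\in Q$ with $\alpha(x)=\alpha(y)$ and $\beta(x)<\beta(y)$. *)

theory Defs
  imports "HOL-Analysis.Analysis"
begin

definition pos :: "('v \<Rightarrow> real) \<Rightarrow> ('v \<Rightarrow> real) \<Rightarrow> 'v \<Rightarrow> real \<times> real" where
  "pos \<alpha> \<beta> v = (\<alpha> v, \<beta> v)"

definition H_edge :: "('v \<Rightarrow> real) \<Rightarrow> ('v \<Rightarrow> real) \<Rightarrow> 'v \<times> 'v \<Rightarrow> bool" where
  "H_edge \<alpha> \<beta> e = (\<beta> (fst e) = \<beta> (snd e) \<and> \<alpha> (fst e) < \<alpha> (snd e))"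

definition V_edge :: "('v \<Rightarrow> real) \<Rightarrow> ('v \<Rightarrow> real) \<Rightarrow> 'v \<times> 'v \<Rightarrow> bool" where
  "V_edge \<alpha> \<beta> e = (\<alpha> (fst e) = \<alpha> (snd e) \<and> \<beta> (snd e) < \<beta> (fst e))"

definition edge_seg :: "('v \<Rightarrow> real) \<Rightarrow> ('v \<Rightarrow> real) \<Rightarrow> 'v \<times> 'v \<Rightarrow> (real \<times> real) set" where
  "edge_seg \<alpha> \<beta> e = closed_segment (pos \<alpha> \<beta> (fst e)) (pos \<alpha> \<beta> (snd e))"

text \<open>Directed paths are represented by their (nonempty) vertex sequence.\<close>
definition edges_of :: "'v list \<Rightarrow> ('v \<times> 'v) list" where
  "edges_of p = zip p (tl p)"

definition dpath :: "('v \<times> 'v) set \<Rightarrow> 'v list \<Rightarrow> bool" where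
  "dpath E p = (p \<noteq> [] \<and> (\<forall>e\<in>set (edges_of p). e \<in> E))"

definition H_path :: "('v \<times> 'v) set \<Rightarrow> ('v \<Rightarrow> real) \<Rightarrow> ('v \<Rightarrow> real) \<Rightarrow> 'v \<Rightarrow> 'v \<Rightarrow> bool" where
  "H_path E \<alpha> \<beta> u v = (\<exists>p. dpath E p \<and> length p \<ge> 2 \<and> hd p = u \<and> last p = v \<and>
       (\<forall>e\<in>set (edges_of p). H_edge \<alpha> \<beta> e))"

definition V_path :: "('v \<times> 'v) set \<Rightarrow> ('v \<Rightarrow> real) \<Rightarrow> ('v \<Rightarrow> real) \<Rightarrow> 'v \<Rightarrow> 'v \<Rightarrow> bool" where
  "V_path E \<alpha> \<beta> u v = (\<exists>p. dpath E p \<and> length p \<ge> 2 \<and> hd p = u \<and> last p = v \<and>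
       (\<forall>e\<in>set (edges_of p). V_edge \<alpha> \<beta> e))"

text \<open>SE-graph with vertex set V, edge set E, source set R (on the ray {0} x [0,oo)),
  sink set C (on the ray [0,oo) x {0}); the ordering of the sources upward and of the sinks
  left-to-right is just their indexing by coordinate.  Inner vertices: V - R - C.\<close>
definition SE_graph :: "'v set \<Rightarrow> ('v \<times> 'v) set \<Rightarrow> 'v set \<Rightarrow> 'v set \<Rightarrow>
    ('v \<Rightarrow> real) \<Rightarrow> ('v \<Rightarrow> real) \<Rightarrow> bool" where
  "SE_graph V E R C \<alpha> \<beta> =
    (finite V \<and> E \<subseteq> V \<times> V \<and> R \<subseteq> V \<and> C \<subseteq> V \<and> R \<inter> C = {} \<and>
     (\<forall>e\<in>E. H_edge \<alpha> \<beta> e \<or> V_edge \<alpha> \<beta> e) \<and>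
     \<comment> \<open>planar embedding: distinct vertices at distinct points, edges meet only at common
        endpoints, and no vertex lies in the interior of an edge\<close>
     inj_on (pos \<alpha> \<beta>) V \<and>
     (\<forall>e1\<in>E. \<forall>e2\<in>E. e1 \<noteq> e2 \<longrightarrow>
        edge_seg \<alpha> \<beta> e1 \<inter> edge_seg \<alpha> \<beta> e2 \<subseteq>
          pos \<alpha> \<beta> ` ({fst e1, snd e1} \<inter> {fst e2, snd e2})) \<and>
     (\<forall>v\<in>V. \<forall>e\<in>E. pos \<alpha> \<beta> v \<in> edge_seg \<alpha> \<beta> e \<longrightarrow> v = fst e \<or> v = snd e) \<and>
     \<comment> \<open>sources and sinks\<close>
     (\<forall>r\<in>R. \<alpha> r = 0 \<and> \<beta> r \<ge> 0) \<and>
     (\<forall>c\<in>C. \<beta> c = 0 \<and> \<alpha> c \<ge> 0) \<and>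
     (\<forall>e\<in>E. snd e \<notin> R \<and> fst e \<notin> C) \<and>
     (\<forall>e\<in>E. fst e \<in> R \<or> snd e \<in> R \<longrightarrow> H_edge \<alpha> \<beta> e) \<and>
     (\<forall>e\<in>E. fst e \<in> C \<or> snd e \<in> C \<longrightarrow> V_edge \<alpha> \<beta> e) \<and>
     \<comment> \<open>every vertex lies on a directed source-to-sink path\<close>
     (\<forall>v\<in>V. \<exists>p. dpath E p \<and> hd p \<in> R \<and> last p \<in> C \<and> v \<in> set p) \<and>
     \<comment> \<open>standing convention (for inner vertices)\<close>
     (\<forall>u\<in>V - R - C. \<forall>v\<in>V - R - C. u \<noteq> v \<longrightarrow>
        (\<alpha> u = \<alpha> v \<longleftrightarrow> V_path E \<alpha> \<beta> u v \<or> V_path E \<alpha> \<beta> v u) \<and>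
        (\<beta> u = \<beta> v \<longleftrightarrow> H_path E \<alpha> \<beta> u v \<or> H_path E \<alpha> \<beta> v u)))"

text \<open>Edge weights in an algebra where x v represents the generator v of L_G and
  xi v its inverse.\<close>
definition edge_wt :: "'v set \<Rightarrow> ('v \<Rightarrow> real) \<Rightarrow> ('v \<Rightarrow> real) \<Rightarrow>
    ('v \<Rightarrow> 'a::ring_1) \<Rightarrow> ('v \<Rightarrow> 'a) \<Rightarrow> 'v \<times> 'v \<Rightarrow> 'a" where
  "edge_wt R \<alpha> \<beta> x xi e =
     (if fst e \<in> R then x (snd e)
      else if H_edge \<alpha> \<beta> e then xi (fst e) * x (snd e)
      else 1)"

definition path_wt :: "'v set \<Rightarrow> ('v \<Rightarrow> real) \<Rightarrow> ('v \<Rightarrow> real) \<Rightarrow>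
    ('v \<Rightarrow> 'a::ring_1) \<Rightarrow> ('v \<Rightarrow> 'a) \<Rightarrow> 'v list \<Rightarrow> 'a" where
  "path_wt R \<alpha> \<beta> x xi p = prod_list (map (edge_wt R \<alpha> \<beta> x xi) (edges_of p))"

definition standard_path :: "('v \<Rightarrow> real) \<Rightarrow> ('v \<Rightarrow> real) \<Rightarrow> 'v list \<Rightarrow> bool" where
  "standard_path \<alpha> \<beta> p = (\<exists>e\<in>set (edges_of p). H_edge \<alpha> \<beta> e)"

definition weakly_intersecting :: "'v list \<Rightarrow> 'v list \<Rightarrow> bool" where
  "weakly_intersecting P Q = (set P \<inter> set Q = {hd P, last P} \<inter> {hd Q, last Q})"

definition path_points :: "('v \<Rightarrow> real) \<Rightarrow> ('v \<Rightarrow> real) \<Rightarrow> 'v list \<Rightarrow> (real \<times> real) set" where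
  "path_points \<alpha> \<beta> p = pos \<alpha> \<beta> ` set p \<union> (\<Union>e\<in>set (edges_of p). edge_seg \<alpha> \<beta> e)"

definition lower_than :: "('v \<Rightarrow> real) \<Rightarrow> ('v \<Rightarrow> real) \<Rightarrow> 'v list \<Rightarrow> 'v list \<Rightarrow> bool" where
  "lower_than \<alpha> \<beta> P Q = (\<exists>x\<in>path_points \<alpha> \<beta> P. \<exists>y\<in>path_points \<alpha> \<beta> Q.
      fst x = fst y \<and> snd x < snd y)"

definition LG_relations :: "('v \<times> 'v) set \<Rightarrow> 'v set \<Rightarrow> ('v \<Rightarrow> real) \<Rightarrow> ('v \<Rightarrow> real) \<Rightarrow>
    'a::ring_1 \<Rightarrow> ('v \<Rightarrow> 'a) \<Rightarrow> bool" where
  "LG_relations E W \<alpha> \<beta> qa x =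
    (\<forall>u\<in>W. \<forall>v\<in>W. u \<noteq> v \<longrightarrow>
       (H_path E \<alpha> \<beta> u v \<longrightarrow> x u * x v = qa * (x v * x u)) \<and>
       (V_path E \<alpha> \<beta> u v \<longrightarrow> x v * x u = qa * (x u * x v)) \<and>
       (\<not> (H_path E \<alpha> \<beta> u v \<or> H_path E \<alpha> \<beta> v u \<or> V_path E \<alpha> \<beta> u v \<or> V_path E \<alpha> \<beta> v u)
          \<longrightarrow> x u * x v = x v * x u))"

end

(*
  Both weights are ordered products of generators and their inverses, and two generators
  q-commute with an exponent read off from their relative position: the sign of the horizontal
  offset if they share a row, of the vertical offset if they share a column, and 0 otherwise.
  So w(P) and w(Q) q-commute with an exponent that is a double sum over the letters of the two
  paths.  For vertex-disjoint P and Q the inner sum over P telescopes for every letter of Q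
  (which lies off P), and the outer sum over Q telescopes again, leaving only the comparison of
  the two endpoints in the common final column.  That comparison gives +1: walking along the
  lower path, the upper one stays strictly above it in every column it covers.  A common source
  is incompatible with lowness, and a common sink reduces to the disjoint case by dropping a
  final vertical edge, whose weight is 1.
*)

theory Submission
  imports Defs
begin

section \<open>q-commuting elements\<close>

definition q_commute :: "('k::field \<Rightarrow> 'a::ring_1) \<Rightarrow> 'k \<Rightarrow> 'a \<Rightarrow> 'a \<Rightarrow> int \<Rightarrow> bool" where
  "q_commute emb q a b n \<longleftrightarrow> a * b = emb (q powi n) * (b * a)"

locale central_scalars =
  fixes emb :: "'k::field \<Rightarrow> 'a::ring_1" and q :: 'k
  assumes emb_one: "emb 1 = 1"
    and emb_mult: "\<And>a b. emb (a * b) = emb a * emb b"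
    and emb_central: "\<And>a y. emb a * y = y * emb a"
    and q_nonzero: "q \<noteq> 0"
begin

abbreviation qpow :: "int \<Rightarrow> 'a" where "qpow n \<equiv> emb (q powi n)"

lemma qpow_add: "qpow (m + n) = qpow m * qpow n"
  using q_nonzero by (simp add: power_int_add emb_mult)

lemma qpow_zero: "qpow 0 = 1"
  by (simp add: emb_one)

lemma qpow_neg_mult: "qpow (- n) * qpow n = 1"
  using qpow_add[of "- n" n] qpow_zero by simp

lemma q_commute_one_left: "q_commute emb q 1 a 0"
  by (simp add: q_commute_def emb_one)

lemma q_commute_one_right: "q_commute emb q a 1 0"
  by (simp add: q_commute_def emb_one)

lemma q_commute_mult_right:
  assumes "q_commute emb q a b m" "q_commute emb q a c n"
  shows "q_commute emb q a (b * c) (m + n)"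
proof -
  have "a * (b * c) = qpow m * (b * (a * c))"
    using assms(1) by (simp add: q_commute_def mult.assoc[symmetric])
  also have "\<dots> = qpow m * (b * (qpow n * (c * a)))"
    using assms(2) by (simp add: q_commute_def)
  also have "\<dots> = qpow (m + n) * (b * c * a)"
    by (metis emb_central mult.assoc qpow_add)
  finally show ?thesis unfolding q_commute_def .
qed

lemma q_commute_swap:
  assumes "q_commute emb q a b n"
  shows "q_commute emb q b a (- n)"
proof -
  have "qpow (- n) * (a * b) = qpow (- n) * (qpow n * (b * a))"
    using assms by (simp add: q_commute_def)
  also have "\<dots> = b * a" by (simp add: mult.assoc[symmetric] qpow_neg_mult)
  finally show ?thesis by (simp add: q_commute_def)
qed

lemma q_commute_mult_left:
  assumes "q_commute emb q a c m" "q_commute emb q b c n"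
  shows "q_commute emb q (a * b) c (m + n)"
  using q_commute_swap[OF q_commute_mult_right[OF q_commute_swap q_commute_swap, OF assms]]
  by (simp add: add.commute)

lemma q_commute_prod_list_right:
  assumes "\<And>y. y \<in> set ys \<Longrightarrow> q_commute emb q a (f y) (g y)"
  shows "q_commute emb q a (prod_list (map f ys)) (sum_list (map g ys))"
  using assms by (induction ys) (auto intro: q_commute_mult_right q_commute_one_right)

lemma q_commute_prod_list_left:
  assumes "\<And>y. y \<in> set ys \<Longrightarrow> q_commute emb q (f y) b (g y)"
  shows "q_commute emb q (prod_list (map f ys)) b (sum_list (map g ys))"
  using assms by (induction ys) (auto intro: q_commute_mult_left q_commute_one_left)

lemma q_commute_inverse_left:
  assumes "q_commute emb q a b n" "a * a' = 1" "a' * a = 1"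
  shows "q_commute emb q a' b (- n)"
proof -
  have "a' * b = a' * (b * a) * a'"
    using assms(2) by (simp add: mult.assoc)
  also have "\<dots> = a' * (qpow (- n) * (a * b)) * a'"
    using q_commute_swap[OF assms(1)] by (simp add: q_commute_def)
  also have "\<dots> = qpow (- n) * ((a' * a) * b * a')"
    by (metis emb_central mult.assoc)
  also have "\<dots> = qpow (- n) * (b * a')"
    using assms(3) by simp
  finally show ?thesis unfolding q_commute_def .
qed

lemma q_commute_inverse_right:
  assumes "q_commute emb q a b n" "b * b' = 1" "b' * b = 1"
  shows "q_commute emb q a b' (- n)"
  using q_commute_swap[OF q_commute_inverse_left[OF q_commute_swap[OF assms(1)] assms(2,3)]]
  by simp

end

section \<open>The south-east order of the plane\<close>

definition se_le :: "real \<times> real \<Rightarrow> real \<times> real \<Rightarrow> bool" where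
  "se_le z w \<longleftrightarrow> fst z \<le> fst w \<and> snd w \<le> snd z"

lemma se_le_refl [simp]: "se_le z z"
  by (simp add: se_le_def)

lemma se_le_trans: "se_le a b \<Longrightarrow> se_le b c \<Longrightarrow> se_le a c"
  by (auto simp: se_le_def)

lemma se_le_antisym: "se_le a b \<Longrightarrow> se_le b a \<Longrightarrow> a = b"
  by (auto simp: se_le_def prod_eq_iff)

lemma closed_segment_se_le:
  assumes "se_le a b" "z \<in> closed_segment a b"
  shows "se_le a z \<and> se_le z b"
proof -
  have "closed_segment a b \<subseteq> {fst a..fst b} \<times> {snd b..snd a}"
  proof (rule closed_segment_subset)
    show "a \<in> {fst a..fst b} \<times> {snd b..snd a}" "b \<in> {fst a..fst b} \<times> {snd b..snd a}"
      using assms(1) by (simp_all add: se_le_def mem_Times_iff)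
    show "convex ({fst a..fst b} \<times> {snd b..snd a})"
      by (intro convex_Times convex_real_interval)
  qed
  then have "z \<in> {fst a..fst b} \<times> {snd b..snd a}" using assms(2) by blast
  then show ?thesis by (simp add: se_le_def mem_Times_iff)
qed

lemma closed_segment_axis_parallel:
  assumes "se_le a z" "se_le z b" "fst a = fst b \<or> snd a = snd b"
  shows "z \<in> closed_segment a b"
proof -
  define c :: "real \<times> real" where "c = (if snd a = snd b then (1, 0) else (0, -1))"
  have c_inner: "c \<bullet> v = (if snd a = snd b then fst v else - snd v)" for v
    by (simp add: c_def inner_prod_def)
  have c_le: "c \<bullet> a \<le> c \<bullet> z" "c \<bullet> z \<le> c \<bullet> b"
    using assms(1,2) unfolding c_inner se_le_def by auto
  obtain w where w: "w \<in> closed_segment a b" "c \<bullet> w = c \<bullet> z"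
    using connected_ivt_hyperplane[OF connected_segment ends_in_segment c_le] by blast
  have "se_le a w" "se_le w b"
    using closed_segment_se_le[OF se_le_trans[OF assms(1,2)] w(1)] by auto
  then have "fst w = fst z \<and> snd w = snd z"
    using w(2) assms unfolding c_inner se_le_def by (auto split: if_splits)
  then have "w = z" by (simp add: prod_eq_iff)
  with w(1) show ?thesis by simp
qed

section \<open>Paths as vertex lists\<close>

lemma edges_of_simps [simp]:
  "edges_of [] = []" "edges_of [u] = []" "edges_of (u # v # r) = (u, v) # edges_of (v # r)"
  by (simp_all add: edges_of_def)

lemma edges_of_append_single:
  "p \<noteq> [] \<Longrightarrow> edges_of (p @ [t]) = edges_of p @ [(last p, t)]"
  by (induction p rule: induct_list012) auto

lemma split_last_of_length_ge_2: "2 \<le> length p \<Longrightarrow> \<exists>p'. p = p' @ [last p] \<and> p' \<noteq> []"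
  by (cases p rule: rev_cases) auto

lemma edges_of_endpoints: "e \<in> set (edges_of p) \<Longrightarrow> fst e \<in> set p \<and> snd e \<in> set p"
  unfolding edges_of_def by (cases e; cases p) (auto dest: set_zip_leftD set_zip_rightD)

lemma edges_of_length: "e \<in> set (edges_of p) \<Longrightarrow> 2 \<le> length p"
  unfolding edges_of_def by (cases p; cases "tl p") auto

lemma dpath_simps [simp]:
  "dpath E [u]" "dpath E (u # v # r) \<longleftrightarrow> (u, v) \<in> E \<and> dpath E (v # r)" "\<not> dpath E []"
  by (auto simp: dpath_def)

lemma dpath_append_single:
  "p \<noteq> [] \<Longrightarrow> dpath E (p @ [t]) \<longleftrightarrow> dpath E p \<and> (last p, t) \<in> E"
  by (auto simp: dpath_def edges_of_append_single)

lemma dpath_edge: "dpath E p \<Longrightarrow> e \<in> set (edges_of p) \<Longrightarrow> e \<in> E"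
  by (simp add: dpath_def)

lemma path_points_simps:
  "path_points \<alpha> \<beta> [u] = {pos \<alpha> \<beta> u}"
  "path_points \<alpha> \<beta> (u # v # r) =
     closed_segment (pos \<alpha> \<beta> u) (pos \<alpha> \<beta> v) \<union> path_points \<alpha> \<beta> (v # r)"
  by (auto simp: path_points_def edges_of_def edge_seg_def)

lemma path_points_append_single:
  "p \<noteq> [] \<Longrightarrow> path_points \<alpha> \<beta> (p @ [t]) =
     path_points \<alpha> \<beta> p \<union> closed_segment (pos \<alpha> \<beta> (last p)) (pos \<alpha> \<beta> t)"
  by (auto simp: path_points_def edges_of_append_single edge_seg_def)

lemma path_points_vertex: "v \<in> set p \<Longrightarrow> pos \<alpha> \<beta> v \<in> path_points \<alpha> \<beta> p"
  by (simp add: path_points_def)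

lemma path_points_edge_seg:
  "e \<in> set (edges_of p) \<Longrightarrow> edge_seg \<alpha> \<beta> e \<subseteq> path_points \<alpha> \<beta> p"
  by (auto simp: path_points_def)

lemma path_wt_append_single:
  "p \<noteq> [] \<Longrightarrow> path_wt R \<alpha> \<beta> x xi (p @ [t]) = path_wt R \<alpha> \<beta> x xi p * edge_wt R \<alpha> \<beta> x xi (last p, t)"
  by (simp add: path_wt_def edges_of_append_single)

lemma standard_path_butlast:
  "p \<noteq> [] \<Longrightarrow> standard_path \<alpha> \<beta> (p @ [t]) \<Longrightarrow> \<not> H_edge \<alpha> \<beta> (last p, t) \<Longrightarrow>
   standard_path \<alpha> \<beta> p"
  by (auto simp: standard_path_def edges_of_append_single)

lemma H_edges_coords:
  "\<forall>e\<in>set (edges_of p). H_edge \<alpha> \<beta> e \<Longrightarrow> 2 \<le> length p \<Longrightarrow>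
   \<beta> (hd p) = \<beta> (last p) \<and> \<alpha> (hd p) < \<alpha> (last p)"
  by (induction p rule: induct_list012) (auto simp: H_edge_def neq_Nil_conv)

lemma V_edges_coords:
  "\<forall>e\<in>set (edges_of p). V_edge \<alpha> \<beta> e \<Longrightarrow> 2 \<le> length p \<Longrightarrow>
   \<alpha> (hd p) = \<alpha> (last p) \<and> \<beta> (last p) < \<beta> (hd p)"
  by (induction p rule: induct_list012) (auto simp: V_edge_def neq_Nil_conv)

lemma H_path_coords: "H_path E \<alpha> \<beta> u v \<Longrightarrow> \<beta> u = \<beta> v \<and> \<alpha> u < \<alpha> v"
  unfolding H_path_def using H_edges_coords by blast

lemma V_path_coords: "V_path E \<alpha> \<beta> u v \<Longrightarrow> \<alpha> u = \<alpha> v \<and> \<beta> v < \<beta> u"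
  unfolding V_path_def using V_edges_coords by blast

lemma H_edge_not_V_edge: "H_edge \<alpha> \<beta> e \<Longrightarrow> \<not> V_edge \<alpha> \<beta> e"
  by (auto simp: H_edge_def V_edge_def)

section \<open>Geometry of SE-graphs\<close>

locale se_graph =
  fixes V :: "'v set" and E :: "('v \<times> 'v) set" and R C :: "'v set"
    and \<alpha> \<beta> :: "'v \<Rightarrow> real"
  assumes SE: "SE_graph V E R C \<alpha> \<beta>"
begin

abbreviation pt :: "'v \<Rightarrow> real \<times> real" where "pt \<equiv> pos \<alpha> \<beta>"
abbreviation pts :: "'v list \<Rightarrow> (real \<times> real) set" where "pts \<equiv> path_points \<alpha> \<beta>"
abbreviation seg :: "'v \<times> 'v \<Rightarrow> (real \<times> real) set" where "seg \<equiv> edge_seg \<alpha> \<beta>"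

lemma pt_simps [simp]: "fst (pt v) = \<alpha> v" "snd (pt v) = \<beta> v"
  by (simp_all add: pos_def)

lemma edge_in_V: "e \<in> E \<Longrightarrow> fst e \<in> V \<and> snd e \<in> V"
  using SE unfolding SE_graph_def by auto

lemma edge_H_or_V: "e \<in> E \<Longrightarrow> H_edge \<alpha> \<beta> e \<or> V_edge \<alpha> \<beta> e"
  using SE unfolding SE_graph_def by auto

lemma pt_inj_on: "inj_on pt V"
  using SE unfolding SE_graph_def by auto

lemma edge_segs_meet_at_common_ends [rule_format]:
  "\<forall>e1\<in>E. \<forall>e2\<in>E. e1 \<noteq> e2 \<longrightarrow>
     seg e1 \<inter> seg e2 \<subseteq> pt ` ({fst e1, snd e1} \<inter> {fst e2, snd e2})"
  using SE unfolding SE_graph_def by (elim conjE) assumption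

lemma vertex_on_edge_seg [rule_format]:
  "\<forall>v\<in>V. \<forall>e\<in>E. pt v \<in> seg e \<longrightarrow> v = fst e \<or> v = snd e"
  using SE unfolding SE_graph_def by (elim conjE) assumption

lemma source_alpha: "r \<in> R \<Longrightarrow> \<alpha> r = 0"
  using SE unfolding SE_graph_def by auto

lemma edge_target_not_source: "e \<in> E \<Longrightarrow> snd e \<notin> R"
  using SE unfolding SE_graph_def by auto

lemma edge_source_not_sink: "e \<in> E \<Longrightarrow> fst e \<notin> C"
  using SE unfolding SE_graph_def by auto

lemma source_edge_H: "e \<in> E \<Longrightarrow> fst e \<in> R \<Longrightarrow> H_edge \<alpha> \<beta> e"
  using SE unfolding SE_graph_def by auto

lemma sink_edge_V: "e \<in> E \<Longrightarrow> snd e \<in> C \<Longrightarrow> V_edge \<alpha> \<beta> e"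
  using SE unfolding SE_graph_def by auto

lemma vertex_on_source_sink_path [rule_format]:
  "\<forall>v\<in>V. \<exists>p. dpath E p \<and> hd p \<in> R \<and> last p \<in> C \<and> v \<in> set p"
  using SE unfolding SE_graph_def by (elim conjE) assumption

lemma standing_convention [rule_format]:
  "\<forall>u\<in>V - R - C. \<forall>v\<in>V - R - C. u \<noteq> v \<longrightarrow>
     (\<alpha> u = \<alpha> v \<longleftrightarrow> V_path E \<alpha> \<beta> u v \<or> V_path E \<alpha> \<beta> v u) \<and>
     (\<beta> u = \<beta> v \<longleftrightarrow> H_path E \<alpha> \<beta> u v \<or> H_path E \<alpha> \<beta> v u)"
  using SE unfolding SE_graph_def by (elim conjE) assumption

lemma sources_in_V: "R \<subseteq> V"
  using SE unfolding SE_graph_def by auto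

lemma edge_se_le: "(u, v) \<in> E \<Longrightarrow> se_le (pt u) (pt v)"
  using edge_H_or_V[of "(u, v)"] by (auto simp: H_edge_def V_edge_def se_le_def)

lemma edge_pt_neq: "(u, v) \<in> E \<Longrightarrow> pt u \<noteq> pt v"
  using edge_H_or_V[of "(u, v)"] by (auto simp: H_edge_def V_edge_def pos_def)

lemma edge_seg_se_le: "e \<in> E \<Longrightarrow> z \<in> seg e \<Longrightarrow> se_le (pt (fst e)) z \<and> se_le z (pt (snd e))"
  using closed_segment_se_le[OF edge_se_le[of "fst e" "snd e"]] by (simp add: edge_seg_def)

lemma path_points_se_le:
  "dpath E p \<Longrightarrow> z \<in> pts p \<Longrightarrow> se_le (pt (hd p)) z \<and> se_le z (pt (last p))"
proof (induction p arbitrary: z rule: induct_list012)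
  case (3 u v r)
  have e: "(u, v) \<in> E" and d: "dpath E (v # r)" using "3.prems"(1) by auto
  have v_last: "se_le (pt v) (pt (last (v # r)))"
    using "3.IH"(2)[OF d path_points_vertex[of v]] by simp
  show ?case
  proof (cases "z \<in> closed_segment (pt u) (pt v)")
    case True
    then have "se_le (pt u) z" "se_le z (pt v)"
      using closed_segment_se_le[OF edge_se_le[OF e]] by auto
    moreover have "se_le z (pt (last (v # r)))" using se_le_trans[OF _ v_last] calculation(2) .
    ultimately show ?thesis by simp
  next
    case False
    then have "z \<in> pts (v # r)" using "3.prems"(2) by (simp add: path_points_simps)
    then have "se_le (pt v) z" "se_le z (pt (last (v # r)))" using "3.IH"(2)[OF d] by auto
    moreover have "se_le (pt u) z" using se_le_trans[OF edge_se_le[OF e] calculation(1)] .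
    ultimately show ?thesis by simp
  qed
qed (auto simp: path_points_simps)

lemma path_vertex_se_le:
  "dpath E p \<Longrightarrow> v \<in> set p \<Longrightarrow> se_le (pt (hd p)) (pt v) \<and> se_le (pt v) (pt (last p))"
  by (rule path_points_se_le[OF _ path_points_vertex])

lemma dpath_distinct: "dpath E p \<Longrightarrow> distinct p"
proof (induction p rule: induct_list012)
  case (3 u v r)
  have e: "(u, v) \<in> E" and d: "dpath E (v # r)" using "3.prems" by auto
  have "pt u \<noteq> pt w" if "w \<in> set (v # r)" for w
  proof
    assume "pt u = pt w"
    moreover have "se_le (pt v) (pt w)" using path_vertex_se_le[OF d that] by simp
    ultimately have "pt u = pt v" using edge_se_le[OF e] se_le_antisym by metis
    then show False using edge_pt_neq[OF e] by simp
  qed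
  then have "u \<notin> set (v # r)" by blast
  then show ?case using "3.IH" d by simp
qed auto

lemma dpath_vertices_in_V: "dpath E p \<Longrightarrow> 2 \<le> length p \<Longrightarrow> set p \<subseteq> V"
proof (induction p rule: induct_list012)
  case (3 u v r)
  then show ?case using edge_in_V[of "(u, v)"] by (cases r) auto
qed auto

lemma standard_path_alpha_less:
  assumes "dpath E p" "standard_path \<alpha> \<beta> p"
  shows "\<alpha> (hd p) < \<alpha> (last p) \<and> 2 \<le> length p"
proof -
  obtain e where e: "e \<in> set (edges_of p)" "H_edge \<alpha> \<beta> e"
    using assms(2) by (auto simp: standard_path_def)
  have "se_le (pt (hd p)) (pt (fst e))" "se_le (pt (snd e)) (pt (last p))"
    using path_vertex_se_le[OF assms(1)] edges_of_endpoints[OF e(1)] by auto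
  then show ?thesis using e(2) edges_of_length[OF e(1)] by (auto simp: se_le_def H_edge_def)
qed

lemma non_source_alpha_pos:
  assumes "v \<in> V" "v \<notin> R"
  shows "0 < \<alpha> v"
proof -
  obtain p where p: "dpath E p" "hd p \<in> R" "v \<in> set p"
    using vertex_on_source_sink_path[OF assms(1)] by blast
  obtain r l where rl: "p = r # l" using p(1) by (cases p) auto
  have "v \<in> set l" using p(2,3) assms(2) rl by auto
  then obtain w l' where l: "l = w # l'" by (cases l) auto
  have e: "(r, w) \<in> E" and d: "dpath E l" using p(1) rl l by auto
  have "\<alpha> r < \<alpha> w" using source_edge_H[OF e] p(2) rl by (simp add: H_edge_def)
  moreover have "\<alpha> r = 0" using source_alpha p(2) rl by simp
  moreover have "\<alpha> w \<le> \<alpha> v"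
    using path_vertex_se_le[OF d \<open>v \<in> set l\<close>] l by (simp add: se_le_def)
  ultimately show ?thesis by simp
qed

lemma vertex_alpha_nonneg: "v \<in> V \<Longrightarrow> 0 \<le> \<alpha> v"
  using non_source_alpha_pos[of v] source_alpha[of v] by fastforce

lemma sources_same_row:
  assumes "r \<in> R" "r' \<in> R" "\<beta> r = \<beta> r'"
  shows "r = r'"
proof (rule inj_onD[OF pt_inj_on])
  show "pt r = pt r'" using assms by (simp add: pos_def source_alpha)
qed (use assms sources_in_V in auto)

lemma aligned_edges_common_target:
  assumes "(a, t) \<in> E" "(b, t) \<in> E"
    and "H_edge \<alpha> \<beta> (a, t) \<and> H_edge \<alpha> \<beta> (b, t) \<or> V_edge \<alpha> \<beta> (a, t) \<and> V_edge \<alpha> \<beta> (b, t)"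
  shows "a = b"
proof -
  have key: "a = b"
    if "(a, t) \<in> E" "(b, t) \<in> E" "se_le (pt a) (pt b)" "\<alpha> a = \<alpha> t \<or> \<beta> a = \<beta> t" for a b
  proof -
    have "pt b \<in> closed_segment (pt a) (pt t)"
      by (rule closed_segment_axis_parallel) (use that edge_se_le[OF that(2)] in auto)
    then have "b = a \<or> b = t"
      using vertex_on_edge_seg[of b "(a, t)"] edge_in_V[OF that(2)] that(1) by (simp add: edge_seg_def)
    then show "a = b" using edge_pt_neq[OF that(2)] by auto
  qed
  have aligned: "\<alpha> a = \<alpha> t \<or> \<beta> a = \<beta> t" "\<alpha> b = \<alpha> t \<or> \<beta> b = \<beta> t"
    using assms(3) by (auto simp: H_edge_def V_edge_def)
  have "se_le (pt a) (pt b) \<or> se_le (pt b) (pt a)"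
    using assms(3) by (auto simp: se_le_def H_edge_def V_edge_def)
  then show ?thesis
  proof
    assume "se_le (pt a) (pt b)"
    from key[OF assms(1,2) this aligned(1)] show ?thesis .
  next
    assume "se_le (pt b) (pt a)"
    from key[OF assms(2,1) this aligned(2)] show ?thesis ..
  qed
qed

lemma H_edges_common_source:
  assumes "(s, a) \<in> E" "(s, b) \<in> E" "H_edge \<alpha> \<beta> (s, a)" "H_edge \<alpha> \<beta> (s, b)"
  shows "a = b"
proof -
  have key: "a = b"
    if "(s, a) \<in> E" "(s, b) \<in> E" "\<beta> s = \<beta> a" "\<beta> s = \<beta> b" "\<alpha> a \<le> \<alpha> b" for a b
  proof -
    have "pt a \<in> closed_segment (pt s) (pt b)"
      by (rule closed_segment_axis_parallel) (use that edge_se_le[OF that(1)] in \<open>auto simp: se_le_def\<close>)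
    then have "a = s \<or> a = b"
      using vertex_on_edge_seg[of a "(s, b)"] edge_in_V[OF that(1)] that(2) by (simp add: edge_seg_def)
    then show "a = b" using edge_pt_neq[OF that(1)] by auto
  qed
  have row: "\<beta> s = \<beta> a" "\<beta> s = \<beta> b" using assms(3,4) by (simp_all add: H_edge_def)
  have "\<alpha> a \<le> \<alpha> b \<or> \<alpha> b \<le> \<alpha> a" by linarith
  then show ?thesis
  proof
    assume "\<alpha> a \<le> \<alpha> b"
    from key[OF assms(1,2) row this] show ?thesis .
  next
    assume "\<alpha> b \<le> \<alpha> a"
    from key[OF assms(2,1) row(2,1) this] show ?thesis ..
  qed
qed

end

section \<open>Commutation exponents of path weights\<close>

definition order_sign :: "real \<Rightarrow> real \<Rightarrow> int" where
  "order_sign a b = (if a < b then 1 else if b < a then -1 else 0)"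

definition col_sign :: "('v \<Rightarrow> real) \<Rightarrow> ('v \<Rightarrow> real) \<Rightarrow> 'v \<Rightarrow> 'v \<Rightarrow> int" where
  "col_sign \<alpha> \<beta> a b = (if \<alpha> a = \<alpha> b then order_sign (\<beta> a) (\<beta> b) else 0)"

definition row_sign :: "('v \<Rightarrow> real) \<Rightarrow> ('v \<Rightarrow> real) \<Rightarrow> 'v \<Rightarrow> 'v \<Rightarrow> int" where
  "row_sign \<alpha> \<beta> a b = (if \<beta> a = \<beta> b then order_sign (\<alpha> a) (\<alpha> b) else 0)"

text \<open>By the standing convention, the relations of \<open>\<L>\<^sub>G\<close> say
  \<open>a b = q\<^bsup>comm_exp a b\<^esup> b a\<close> for all inner vertices \<open>a\<close>, \<open>b\<close>.\<close>
definition comm_exp :: "('v \<Rightarrow> real) \<Rightarrow> ('v \<Rightarrow> real) \<Rightarrow> 'v \<Rightarrow> 'v \<Rightarrow> int" where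
  "comm_exp \<alpha> \<beta> a b = row_sign \<alpha> \<beta> a b + col_sign \<alpha> \<beta> a b"

text \<open>The weight of an edge as a word in generators (sign \<open>1\<close>) and their inverses (sign \<open>-1\<close>).\<close>
definition edge_word :: "'v set \<Rightarrow> ('v \<Rightarrow> real) \<Rightarrow> ('v \<Rightarrow> real) \<Rightarrow> 'v \<times> 'v \<Rightarrow> ('v \<times> int) list" where
  "edge_word R \<alpha> \<beta> e =
     (if fst e \<in> R then [(snd e, 1)]
      else if H_edge \<alpha> \<beta> e then [(fst e, -1), (snd e, 1)]
      else [])"

definition path_word :: "'v set \<Rightarrow> ('v \<Rightarrow> real) \<Rightarrow> ('v \<Rightarrow> real) \<Rightarrow> 'v list \<Rightarrow> ('v \<times> int) list" where
  "path_word R \<alpha> \<beta> p = concat (map (edge_word R \<alpha> \<beta>) (edges_of p))"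

definition letter :: "('v \<Rightarrow> 'a) \<Rightarrow> ('v \<Rightarrow> 'a) \<Rightarrow> 'v \<times> int \<Rightarrow> 'a" where
  "letter x xi l = (if snd l = 1 then x (fst l) else xi (fst l))"

definition word_sum :: "('v \<times> int) list \<Rightarrow> ('v \<Rightarrow> int) \<Rightarrow> int" where
  "word_sum w f = sum_list (map (\<lambda>l. snd l * f (fst l)) w)"

lemma col_sign_swap: "col_sign \<alpha> \<beta> b a = - col_sign \<alpha> \<beta> a b"
  by (auto simp: col_sign_def order_sign_def)

lemma word_sum_simps [simp]:
  "word_sum [] f = 0"
  "word_sum (l # w) f = snd l * f (fst l) + word_sum w f"
  "word_sum (w1 @ w2) f = word_sum w1 f + word_sum w2 f"
  by (simp_all add: word_sum_def)

lemma word_sum_concat: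
  "word_sum (concat (map g xs)) f = sum_list (map (\<lambda>e. word_sum (g e) f) xs)"
  by (induction xs) auto

lemma word_sum_add: "word_sum w (\<lambda>v. f v + g v) = word_sum w f + word_sum w g"
  by (induction w) (auto simp: algebra_simps)

lemma word_sum_diff: "word_sum w (\<lambda>v. f v - g v) = word_sum w f - word_sum w g"
  by (induction w) (auto simp: algebra_simps)

lemma word_sum_cong: "(\<And>v s. (v, s) \<in> set w \<Longrightarrow> f v = g v) \<Longrightarrow> word_sum w f = word_sum w g"
  unfolding word_sum_def by (rule arg_cong[where f = sum_list], rule map_cong) force+

lemma word_sum_eq_0: "(\<And>v s. (v, s) \<in> set w \<Longrightarrow> f v = 0) \<Longrightarrow> word_sum w f = 0"
  using word_sum_cong[of w f "\<lambda>_. 0"] by (simp add: word_sum_def)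

lemma edge_word_sum:
  "word_sum (edge_word R \<alpha> \<beta> e) f =
     (if fst e \<in> R then f (snd e) else if H_edge \<alpha> \<beta> e then f (snd e) - f (fst e) else 0)"
  by (simp add: edge_word_def)

lemma path_word_sum:
  "word_sum (path_word R \<alpha> \<beta> p) f = sum_list (map (\<lambda>e. word_sum (edge_word R \<alpha> \<beta> e) f) (edges_of p))"
  unfolding path_word_def word_sum_concat ..

lemma path_wt_eq_word:
  "path_wt R \<alpha> \<beta> x xi p = prod_list (map (letter x xi) (path_word R \<alpha> \<beta> p))"
proof -
  have edge: "prod_list (map (letter x xi) (edge_word R \<alpha> \<beta> e)) = edge_wt R \<alpha> \<beta> x xi e" for e
    by (simp add: edge_word_def edge_wt_def letter_def)
  have concat: "prod_list (map f (concat ws)) = prod_list (map (\<lambda>w. prod_list (map f w)) ws)"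
    for f :: "'v \<times> int \<Rightarrow> 'a" and ws
    by (induction ws) auto
  show ?thesis by (simp only: path_wt_def path_word_def concat map_map o_def edge)
qed

lemma sum_list_edges_telescope:
  fixes F :: "'v \<Rightarrow> 'b::ab_group_add"
  shows "p \<noteq> [] \<Longrightarrow> sum_list (map (\<lambda>e. F (snd e) - F (fst e)) (edges_of p)) = F (last p) - F (hd p)"
  by (induction p rule: induct_list012) auto

context se_graph
begin

lemma path_word_letter:
  assumes "dpath E p" "(v, s) \<in> set (path_word R \<alpha> \<beta> p)"
  shows "v \<in> V - R - C \<and> (s = 1 \<or> s = -1) \<and> v \<in> set p"
proof -
  obtain e where e: "e \<in> set (edges_of p)" "(v, s) \<in> set (edge_word R \<alpha> \<beta> e)"
    using assms(2) by (auto simp: path_word_def)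
  have eE: "e \<in> E" using dpath_edge[OF assms(1) e(1)] .
  have "H_edge \<alpha> \<beta> e \<Longrightarrow> snd e \<notin> C"
    using sink_edge_V[OF eE] H_edge_not_V_edge by blast
  then show ?thesis
    using e(2) edge_in_V[OF eE] edge_target_not_source[OF eE] edge_source_not_sink[OF eE]
      source_edge_H[OF eE] edges_of_endpoints[OF e(1)]
    by (auto simp: edge_word_def split: if_splits)
qed

lemma path_word_sum_telescope:
  assumes "p \<noteq> []"
    and "\<And>e. e \<in> set (edges_of p) \<Longrightarrow> word_sum (edge_word R \<alpha> \<beta> e) f = F (snd e) - F (fst e)"
  shows "word_sum (path_word R \<alpha> \<beta> p) f = F (last p) - F (hd p)"
  using assms by (simp add: path_word_sum sum_list_edges_telescope cong: map_cong)

lemma path_word_sum_source: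
  assumes "dpath E p" "2 \<le> length p"
    and "\<And>e. e \<in> set (edges_of p) \<Longrightarrow>
           word_sum (edge_word R \<alpha> \<beta> e) f = (if fst e \<in> R then g (fst e) else 0)"
  shows "word_sum (path_word R \<alpha> \<beta> p) f = (if hd p \<in> R then g (hd p) else 0)"
  using assms
proof (induction p rule: induct_list012)
  case (3 u v r)
  have v: "v \<notin> R" using edge_target_not_source[of "(u, v)"] "3.prems"(1) by simp
  have "word_sum (path_word R \<alpha> \<beta> (v # r)) f = 0"
  proof (cases r)
    case Nil then show ?thesis by (simp add: path_word_def)
  next
    case (Cons w r')
    then show ?thesis using "3.IH"(2) "3.prems" v by simp
  qed
  then show ?case using "3.prems"(3) by (simp add: path_word_def)
qed auto

end

locale SE_graph_algebra = se_graph V E R C \<alpha> \<beta> + central_scalars emb q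
  for V :: "'v set" and E R C \<alpha> \<beta> and emb :: "'k::field \<Rightarrow> 'a::ring_1" and q +
  fixes x xi :: "'v \<Rightarrow> 'a"
  assumes inverse: "\<And>v. v \<in> V - R - C \<Longrightarrow> x v * xi v = 1 \<and> xi v * x v = 1"
    and relations: "LG_relations E (V - R - C) \<alpha> \<beta> (emb q) x"
begin

lemma generators_q_commute:
  assumes u: "u \<in> V - R - C" and v: "v \<in> V - R - C"
  shows "q_commute emb q (x u) (x v) (comm_exp \<alpha> \<beta> u v)"
proof (cases "u = v")
  case True
  then show ?thesis by (simp add: q_commute_def comm_exp_def row_sign_def col_sign_def
        order_sign_def emb_one)
next
  case False
  note rel_uv = relations[unfolded LG_relations_def, rule_format, OF u v False]
  note rel_vu = relations[unfolded LG_relations_def, rule_format, OF v u False[symmetric]]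
  note conv = standing_convention[OF u v False]
  have q1: "q_commute emb q a b 1 \<longleftrightarrow> a * b = emb q * (b * a)" for a b
    by (simp add: q_commute_def)
  have "pt u \<noteq> pt v" using inj_onD[OF pt_inj_on] u v False by blast
  then consider (right) "\<beta> u = \<beta> v" "\<alpha> u < \<alpha> v" | (left) "\<beta> u = \<beta> v" "\<alpha> v < \<alpha> u"
    | (below) "\<alpha> u = \<alpha> v" "\<beta> v < \<beta> u" | (above) "\<alpha> u = \<alpha> v" "\<beta> u < \<beta> v"
    | (apart) "\<alpha> u \<noteq> \<alpha> v" "\<beta> u \<noteq> \<beta> v"
    by (force simp: pos_def)
  then show ?thesis
  proof cases
    case right
    then have "H_path E \<alpha> \<beta> u v" using conv H_path_coords[of E \<alpha> \<beta> v u] by auto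
    then show ?thesis using rel_uv right q1 by (simp add: comm_exp_def row_sign_def col_sign_def order_sign_def)
  next
    case left
    then have "H_path E \<alpha> \<beta> v u" using conv H_path_coords[of E \<alpha> \<beta> u v] by auto
    then show ?thesis
      using q_commute_swap[of "x v" "x u" 1] rel_vu left q1
      by (simp add: comm_exp_def row_sign_def col_sign_def order_sign_def)
  next
    case below
    then have "V_path E \<alpha> \<beta> u v" using conv V_path_coords[of E \<alpha> \<beta> v u] by auto
    then show ?thesis
      using q_commute_swap[of "x v" "x u" 1] rel_uv below q1
      by (simp add: comm_exp_def row_sign_def col_sign_def order_sign_def)
  next
    case above
    then have "V_path E \<alpha> \<beta> v u" using conv V_path_coords[of E \<alpha> \<beta> u v] by auto
    then show ?thesis using rel_vu above q1 by (simp add: comm_exp_def row_sign_def col_sign_def order_sign_def)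
  next
    case apart
    then have "\<not> (H_path E \<alpha> \<beta> u v \<or> H_path E \<alpha> \<beta> v u \<or> V_path E \<alpha> \<beta> u v \<or> V_path E \<alpha> \<beta> v u)"
      using H_path_coords V_path_coords by metis
    then show ?thesis
      using rel_uv apart by (simp add: q_commute_def comm_exp_def row_sign_def col_sign_def emb_one)
  qed
qed

lemma letters_q_commute:
  assumes "u \<in> V - R - C" "v \<in> V - R - C" "s = 1 \<or> s = -1" "t = 1 \<or> t = -1"
  shows "q_commute emb q (letter x xi (u, s)) (letter x xi (v, t)) (s * t * comm_exp \<alpha> \<beta> u v)"
proof -
  note xx = generators_q_commute[OF assms(1,2)]
  have iu: "x u * xi u = 1" "xi u * x u = 1" and iv: "x v * xi v = 1" "xi v * x v = 1"
    using inverse assms(1,2) by auto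
  show ?thesis
    using assms(3,4) xx q_commute_inverse_left[OF xx iu] q_commute_inverse_right[OF xx iv]
      q_commute_inverse_right[OF q_commute_inverse_left[OF xx iu] iv]
    by (auto simp: letter_def)
qed

lemma path_wts_q_commute:
  assumes "dpath E P" "dpath E Q"
  shows "q_commute emb q (path_wt R \<alpha> \<beta> x xi P) (path_wt R \<alpha> \<beta> x xi Q)
    (word_sum (path_word R \<alpha> \<beta> Q) (\<lambda>b. word_sum (path_word R \<alpha> \<beta> P) (\<lambda>a. comm_exp \<alpha> \<beta> a b)))"
proof -
  let ?P = "path_word R \<alpha> \<beta> P" and ?Q = "path_word R \<alpha> \<beta> Q"
  have "q_commute emb q (prod_list (map (letter x xi) ?P)) (letter x xi b)
          (snd b * word_sum ?P (\<lambda>a. comm_exp \<alpha> \<beta> a (fst b)))" if b: "b \<in> set ?Q" for b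
  proof -
    have "q_commute emb q (prod_list (map (letter x xi) ?P)) (letter x xi b)
            (sum_list (map (\<lambda>a. snd a * snd b * comm_exp \<alpha> \<beta> (fst a) (fst b)) ?P))"
    proof (rule q_commute_prod_list_left)
      fix a assume "a \<in> set ?P"
      then show "q_commute emb q (letter x xi a) (letter x xi b) (snd a * snd b * comm_exp \<alpha> \<beta> (fst a) (fst b))"
        using letters_q_commute[of "fst a" "fst b" "snd a" "snd b"]
          path_word_letter[OF assms(1), of "fst a" "snd a"]
          path_word_letter[OF assms(2), of "fst b" "snd b"] b by simp
    qed
    moreover have "sum_list (map (\<lambda>a. snd a * snd b * comm_exp \<alpha> \<beta> (fst a) (fst b)) w)
        = snd b * word_sum w (\<lambda>a. comm_exp \<alpha> \<beta> a (fst b))" for w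
      by (induction w) (simp_all add: algebra_simps)
    ultimately show ?thesis by simp
  qed
  then have "q_commute emb q (prod_list (map (letter x xi) ?P)) (prod_list (map (letter x xi) ?Q))
      (sum_list (map (\<lambda>b. snd b * word_sum ?P (\<lambda>a. comm_exp \<alpha> \<beta> a (fst b))) ?Q))"
    by (rule q_commute_prod_list_right)
  then show ?thesis by (simp add: path_wt_eq_word word_sum_def)
qed

end

section \<open>Vertex-disjoint paths\<close>

lemma word_sum_minus: "word_sum w (\<lambda>v. - f v) = - word_sum w f"
  by (induction w) auto

context se_graph
begin

lemma vertical_edge_avoids_point:
  assumes "(u, v) \<in> E" "V_edge \<alpha> \<beta> (u, v)" "pt b \<notin> seg (u, v)" "\<alpha> u = \<alpha> b"
  shows "\<beta> b < \<beta> v \<or> \<beta> u < \<beta> b"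
proof (rule ccontr)
  assume "\<not> ?thesis"
  then have "pt b \<in> closed_segment (pt u) (pt v)"
    using assms(2,4) by (intro closed_segment_axis_parallel) (auto simp: se_le_def V_edge_def)
  then show False using assms(3) by (simp add: edge_seg_def)
qed

lemma horizontal_edge_avoids_point:
  assumes "(u, v) \<in> E" "H_edge \<alpha> \<beta> (u, v)" "pt b \<notin> seg (u, v)" "\<beta> u = \<beta> b"
  shows "\<alpha> b < \<alpha> u \<or> \<alpha> v < \<alpha> b"
proof (rule ccontr)
  assume "\<not> ?thesis"
  then have "pt b \<in> closed_segment (pt u) (pt v)"
    using assms(2,4) by (intro closed_segment_axis_parallel) (auto simp: se_le_def H_edge_def)
  then show False using assms(3) by (simp add: edge_seg_def)
qed

lemma edge_word_sum_col_sign: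
  assumes e: "e \<in> E" and b: "0 < \<alpha> b" "pt b \<notin> seg e"
  shows "word_sum (edge_word R \<alpha> \<beta> e) (\<lambda>a. col_sign \<alpha> \<beta> a b) =
    col_sign \<alpha> \<beta> (snd e) b - col_sign \<alpha> \<beta> (fst e) b"
proof -
  obtain u v where uv: "e = (u, v)" by (cases e)
  consider (source) "u \<in> R" | (H) "u \<notin> R" "H_edge \<alpha> \<beta> e" | (V) "V_edge \<alpha> \<beta> e" "\<not> H_edge \<alpha> \<beta> e"
    using edge_H_or_V[OF e] by blast
  then show ?thesis
  proof cases
    case source
    then have "col_sign \<alpha> \<beta> u b = 0" using source_alpha b(1) by (simp add: col_sign_def)
    then show ?thesis using source uv by (simp add: edge_word_sum)
  next
    case H
    then show ?thesis using uv by (simp add: edge_word_sum)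
  next
    case V
    have "col_sign \<alpha> \<beta> v b = col_sign \<alpha> \<beta> u b"
      using V uv vertical_edge_avoids_point[of u v b] e b(2)
      by (auto simp: col_sign_def order_sign_def V_edge_def)
    then show ?thesis using V uv source_edge_H[OF e] by (auto simp: edge_word_sum)
  qed
qed

lemma edge_word_sum_row_sign:
  assumes e: "e \<in> E" and b: "0 < \<alpha> b" "pt b \<notin> seg e"
  shows "word_sum (edge_word R \<alpha> \<beta> e) (\<lambda>a. row_sign \<alpha> \<beta> a b) =
    (if fst e \<in> R then (if \<beta> (fst e) = \<beta> b then 1 else 0) else 0)"
proof -
  obtain u v where uv: "e = (u, v)" by (cases e)
  consider (source) "u \<in> R" | (H) "u \<notin> R" "H_edge \<alpha> \<beta> e" | (V) "u \<notin> R" "\<not> H_edge \<alpha> \<beta> e"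
    by blast
  then show ?thesis
  proof cases
    case source
    have "H_edge \<alpha> \<beta> (u, v)" "\<alpha> u = 0" using source_edge_H[OF e] source_alpha source uv by auto
    then have "row_sign \<alpha> \<beta> v b = (if \<beta> u = \<beta> b then 1 else 0)"
      using horizontal_edge_avoids_point[of u v b] e b uv
      by (auto simp: row_sign_def order_sign_def H_edge_def)
    then show ?thesis using source uv by (simp add: edge_word_sum)
  next
    case H
    have "row_sign \<alpha> \<beta> v b = row_sign \<alpha> \<beta> u b"
      using H uv horizontal_edge_avoids_point[of u v b] e b(2)
      by (auto simp: row_sign_def order_sign_def H_edge_def)
    then show ?thesis using H uv by (simp add: edge_word_sum)
  qed (simp add: edge_word_sum uv)
qed

lemma edge_word_sum_row:
  "e \<in> E \<Longrightarrow> word_sum (edge_word R \<alpha> \<beta> e) (\<lambda>b. f (\<beta> b)) = (if fst e \<in> R then f (\<beta> (fst e)) else 0)"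
  using source_edge_H[of e] by (auto simp: edge_word_sum H_edge_def)

lemma path_word_sum_col_sign:
  assumes "dpath E p" "0 < \<alpha> b" "pt b \<notin> pts p"
  shows "word_sum (path_word R \<alpha> \<beta> p) (\<lambda>a. col_sign \<alpha> \<beta> a b) =
    col_sign \<alpha> \<beta> (last p) b - col_sign \<alpha> \<beta> (hd p) b"
proof (rule path_word_sum_telescope)
  show "p \<noteq> []" using assms(1) by (simp add: dpath_def)
  fix e assume e: "e \<in> set (edges_of p)"
  show "word_sum (edge_word R \<alpha> \<beta> e) (\<lambda>a. col_sign \<alpha> \<beta> a b) =
      col_sign \<alpha> \<beta> (snd e) b - col_sign \<alpha> \<beta> (fst e) b"
    using edge_word_sum_col_sign[OF dpath_edge[OF assms(1) e] assms(2)] path_points_edge_seg[OF e]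
      assms(3) by blast
qed

lemma path_word_sum_col_sign':
  assumes "dpath E p" "0 < \<alpha> z" "pt z \<notin> pts p"
  shows "word_sum (path_word R \<alpha> \<beta> p) (\<lambda>b. col_sign \<alpha> \<beta> z b) =
    col_sign \<alpha> \<beta> z (last p) - col_sign \<alpha> \<beta> z (hd p)"
  using path_word_sum_col_sign[OF assms] word_sum_minus[of _ "\<lambda>b. col_sign \<alpha> \<beta> b z"]
  by (simp add: col_sign_swap[of _ _ z])

lemma path_word_sum_row_sign:
  assumes "dpath E p" "2 \<le> length p" "0 < \<alpha> b" "pt b \<notin> pts p"
  shows "word_sum (path_word R \<alpha> \<beta> p) (\<lambda>a. row_sign \<alpha> \<beta> a b) =
    (if hd p \<in> R \<and> \<beta> (hd p) = \<beta> b then 1 else 0)"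
proof -
  have "word_sum (path_word R \<alpha> \<beta> p) (\<lambda>a. row_sign \<alpha> \<beta> a b) =
      (if hd p \<in> R then (if \<beta> (hd p) = \<beta> b then 1 else 0) else 0)"
    using assms edge_word_sum_row_sign dpath_edge path_points_edge_seg
    by (intro path_word_sum_source) blast+
  then show ?thesis by simp
qed

lemma path_word_sum_row:
  "dpath E p \<Longrightarrow> 2 \<le> length p \<Longrightarrow>
   word_sum (path_word R \<alpha> \<beta> p) (\<lambda>b. f (\<beta> b)) = (if hd p \<in> R then f (\<beta> (hd p)) else 0)"
  using edge_word_sum_row dpath_edge by (intro path_word_sum_source) blast+

lemma disjoint_path_points:
  assumes P: "dpath E P" "2 \<le> length P" and Q: "dpath E Q" "2 \<le> length Q"
    and disjoint: "set P \<inter> set Q = {}"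
  shows "pts P \<inter> pts Q = {}"
proof (rule ccontr)
  assume "pts P \<inter> pts Q \<noteq> {}"
  then obtain z where zP: "z \<in> pts P" and zQ: "z \<in> pts Q" by auto
  have VP: "set P \<subseteq> V" and VQ: "set Q \<subseteq> V" using dpath_vertices_in_V P Q by auto
  have disjoint': "set Q \<inter> set P = {}" using disjoint by blast
  have vertex_seg: False
    if "dpath E p" "set p \<inter> set p' = {}" "set p' \<subseteq> V" "u \<in> set p'" "z = pt u"
      "e \<in> set (edges_of p)" "z \<in> seg e" for p p' u e
  proof -
    have "u = fst e \<or> u = snd e"
      using vertex_on_edge_seg[OF _ dpath_edge[OF that(1,6)]] that(3,4,5,7) by blast
    then show False using edges_of_endpoints[OF that(6)] that(2,4) by auto
  qed
  have seg_seg: False if "e \<in> set (edges_of P)" "z \<in> seg e" "f \<in> set (edges_of Q)" "z \<in> seg f" for e f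
  proof (cases "e = f")
    case True
    then show False using edges_of_endpoints[OF that(1)] edges_of_endpoints[OF that(3)] disjoint by auto
  next
    case False
    have "z \<in> pt ` ({fst e, snd e} \<inter> {fst f, snd f})"
      using edge_segs_meet_at_common_ends[OF dpath_edge[OF P(1) that(1)] dpath_edge[OF Q(1) that(3)] False]
        that(2,4) by blast
    then show False using edges_of_endpoints[OF that(1)] edges_of_endpoints[OF that(3)] disjoint by auto
  qed
  have vertex_vertex: False if "u \<in> set P" "v \<in> set Q" "z = pt u" "z = pt v" for u v
    using inj_onD[OF pt_inj_on, of u v] that VP VQ disjoint by auto
  have split: "(\<exists>u\<in>set p. z = pt u) \<or> (\<exists>e\<in>set (edges_of p). z \<in> seg e)" if "z \<in> pts p" for p
    using that by (auto simp: path_points_def)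
  from split[OF zP] show False
  proof (elim disjE bexE)
    fix u assume u: "u \<in> set P" "z = pt u"
    from split[OF zQ] show False
    proof (elim disjE bexE)
      fix v assume "v \<in> set Q" "z = pt v"
      from vertex_vertex[OF u(1) this(1) u(2) this(2)] show False .
    next
      fix f assume "f \<in> set (edges_of Q)" "z \<in> seg f"
      from vertex_seg[OF Q(1) disjoint' VP u this] show False .
    qed
  next
    fix e assume e: "e \<in> set (edges_of P)" "z \<in> seg e"
    from split[OF zQ] show False
    proof (elim disjE bexE)
      fix v assume "v \<in> set Q" "z = pt v"
      from vertex_seg[OF P(1) disjoint VQ this e] show False .
    next
      fix f assume "f \<in> set (edges_of Q)" "z \<in> seg f"
      from seg_seg[OF e this] show False .
    qed
  qed
qed

end

context SE_graph_algebra
begin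

lemma disjoint_paths_q_commute:
  assumes P: "dpath E P" "standard_path \<alpha> \<beta> P" and Q: "dpath E Q" "standard_path \<alpha> \<beta> Q"
    and disjoint: "set P \<inter> set Q = {}" and ends: "\<alpha> (last P) = \<alpha> (last Q)"
    and starts: "\<alpha> (hd P) = \<alpha> (hd Q) \<Longrightarrow> \<alpha> (hd P) = 0"
  shows "q_commute emb q (path_wt R \<alpha> \<beta> x xi P) (path_wt R \<alpha> \<beta> x xi Q)
    (order_sign (\<beta> (last P)) (\<beta> (last Q)))"
proof -
  let ?P = "path_word R \<alpha> \<beta> P" and ?Q = "path_word R \<alpha> \<beta> Q"
  let ?sP = "hd P" and ?tP = "last P" and ?sQ = "hd Q" and ?tQ = "last Q"
  have lP: "\<alpha> ?sP < \<alpha> ?tP" "2 \<le> length P" and lQ: "\<alpha> ?sQ < \<alpha> ?tQ" "2 \<le> length Q"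
    using standard_path_alpha_less P Q by auto
  have ne: "P \<noteq> []" "Q \<noteq> []" using lP(2) lQ(2) by auto
  have ends_V: "?sP \<in> V" "?tP \<in> V"
    using dpath_vertices_in_V[OF P(1) lP(2)] hd_in_set[OF ne(1)] last_in_set[OF ne(1)] by auto
  have apart: "pts P \<inter> pts Q = {}" using disjoint_path_points P(1) lP(2) Q(1) lQ(2) disjoint .
  have Q_letter: "0 < \<alpha> b \<and> pt b \<notin> pts P" if "(b, s) \<in> set ?Q" for b s
    using path_word_letter[OF Q(1) that] non_source_alpha_pos path_points_vertex[of b Q] apart by auto
  let ?ind = "\<lambda>b. if ?sP \<in> R \<and> \<beta> ?sP = \<beta> b then 1 else 0 :: int"
  have "word_sum ?Q (\<lambda>b. word_sum ?P (\<lambda>a. comm_exp \<alpha> \<beta> a b)) =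
      word_sum ?Q (\<lambda>b. col_sign \<alpha> \<beta> ?tP b - col_sign \<alpha> \<beta> ?sP b + ?ind b)"
  proof (rule word_sum_cong)
    fix b s assume "(b, s) \<in> set ?Q"
    then show "word_sum ?P (\<lambda>a. comm_exp \<alpha> \<beta> a b) = col_sign \<alpha> \<beta> ?tP b - col_sign \<alpha> \<beta> ?sP b + ?ind b"
      using Q_letter path_word_sum_col_sign[OF P(1)] path_word_sum_row_sign[OF P(1) lP(2)]
      by (simp add: comm_exp_def word_sum_add)
  qed
  also have "\<dots> = word_sum ?Q (col_sign \<alpha> \<beta> ?tP) - word_sum ?Q (col_sign \<alpha> \<beta> ?sP) + word_sum ?Q ?ind"
    by (simp add: word_sum_add word_sum_diff)
  also have "word_sum ?Q (col_sign \<alpha> \<beta> ?tP) = order_sign (\<beta> ?tP) (\<beta> ?tQ)"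
  proof -
    have "0 < \<alpha> ?tP" using lP(1) vertex_alpha_nonneg[OF ends_V(1)] by linarith
    moreover have "pt ?tP \<notin> pts Q" using apart path_points_vertex[of ?tP P] last_in_set[OF ne(1)] by auto
    ultimately have "word_sum ?Q (col_sign \<alpha> \<beta> ?tP) = col_sign \<alpha> \<beta> ?tP ?tQ - col_sign \<alpha> \<beta> ?tP ?sQ"
      by (rule path_word_sum_col_sign'[OF Q(1)])
    then show ?thesis using ends lQ(1) by (simp add: col_sign_def)
  qed
  also have "word_sum ?Q (col_sign \<alpha> \<beta> ?sP) = 0"
  proof (cases "?sP \<in> R")
    case True
    show ?thesis
    proof (rule word_sum_eq_0)
      fix v s assume "(v, s) \<in> set ?Q"
      from Q_letter[OF this] show "col_sign \<alpha> \<beta> ?sP v = 0"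
        using source_alpha[OF True] by (simp add: col_sign_def)
    qed
  next
    case False
    then have "0 < \<alpha> ?sP" using non_source_alpha_pos ends_V(1) by blast
    moreover have "pt ?sP \<notin> pts Q" using apart path_points_vertex[of ?sP P] hd_in_set[OF ne(1)] by auto
    ultimately have "word_sum ?Q (col_sign \<alpha> \<beta> ?sP) = col_sign \<alpha> \<beta> ?sP ?tQ - col_sign \<alpha> \<beta> ?sP ?sQ"
      by (rule path_word_sum_col_sign'[OF Q(1)])
    then show ?thesis using starts ends lP(1) \<open>0 < \<alpha> ?sP\<close> by (auto simp: col_sign_def)
  qed
  also have "word_sum ?Q ?ind = 0"
  proof -
    have "?sP \<noteq> ?sQ" using disjoint hd_in_set[OF ne(1)] hd_in_set[OF ne(2)] by auto
    then have "\<not> (?sQ \<in> R \<and> ?sP \<in> R \<and> \<beta> ?sP = \<beta> ?sQ)" using sources_same_row by blast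
    then show ?thesis
      using path_word_sum_row[OF Q(1) lQ(2), of "\<lambda>y. if ?sP \<in> R \<and> \<beta> ?sP = y then 1 else 0"] by auto
  qed
  finally show ?thesis using path_wts_q_commute[OF P(1) Q(1)] by simp
qed

end

section \<open>Lower paths\<close>

definition below_path :: "('v \<Rightarrow> real) \<Rightarrow> ('v \<Rightarrow> real) \<Rightarrow> 'v list \<Rightarrow> real \<times> real \<Rightarrow> bool" where
  "below_path \<alpha> \<beta> Q z \<longleftrightarrow> (\<exists>y\<in>path_points \<alpha> \<beta> Q. fst z = fst y \<and> snd z < snd y)"

lemma lower_than_iff: "lower_than \<alpha> \<beta> P Q \<longleftrightarrow> (\<exists>z\<in>path_points \<alpha> \<beta> P. below_path \<alpha> \<beta> Q z)"
  by (simp add: lower_than_def below_path_def)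

context se_graph
begin

lemma path_points_ivt:
  assumes "dpath E p" "z1 \<in> pts p" "z2 \<in> pts p" "se_le z1 z2" "c \<bullet> z1 \<le> y" "y \<le> c \<bullet> z2"
  shows "\<exists>w\<in>pts p. se_le z1 w \<and> se_le w z2 \<and> c \<bullet> w = y"
  using assms
proof (induction p arbitrary: z1 z2 rule: induct_list012)
  case (2 u)
  then have "z1 = pt u" "z2 = pt u" by (auto simp: path_points_simps)
  then show ?case using 2 by (intro bexI[of _ z1]) auto
next
  case (3 u v r)
  let ?S = "closed_segment (pt u) (pt v)"
  have e: "(u, v) \<in> E" and d: "dpath E (v # r)" using "3.prems"(1) by auto
  have pts_uv: "pts (u # v # r) = ?S \<union> pts (v # r)" by (simp add: path_points_simps)
  have v_in: "pt v \<in> pts (v # r)" by (rule path_points_vertex) simp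
  have rest_ge: "se_le (pt v) z" if "z \<in> pts (v # r)" for z
    using path_points_se_le[OF d that] by simp
  have S_le: "se_le (pt u) z \<and> se_le z (pt v)" if "z \<in> ?S" for z
    using closed_segment_se_le[OF edge_se_le[OF e] that] .
  have seg_ivt: "\<exists>w\<in>closed_segment a b. c \<bullet> w = y" if "c \<bullet> a \<le> y" "y \<le> c \<bullet> b" for a b
    using connected_ivt_hyperplane[OF connected_segment ends_in_segment that] .
  consider (rest) "z1 \<in> pts (v # r)" "z2 \<in> pts (v # r)" | (degenerate) "z1 \<in> pts (v # r)" "z2 \<in> ?S" "z2 \<notin> pts (v # r)"
    | (across) "z1 \<in> ?S" "z2 \<in> pts (v # r)" | (segment) "z1 \<in> ?S" "z2 \<in> ?S"
    using "3.prems"(2,3) pts_uv by blast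
  then show ?case
  proof cases
    case rest
    then show ?thesis using "3.IH"(2)[OF d _ _ "3.prems"(4-6)] pts_uv by blast
  next
    case degenerate
    have "se_le z2 z1" using se_le_trans[OF conjunct2[OF S_le[OF degenerate(2)]] rest_ge[OF degenerate(1)]] .
    then have "z1 = z2" using "3.prems"(4) se_le_antisym by blast
    then show ?thesis using "3.prems" by (intro bexI[of _ z1]) auto
  next
    case across
    show ?thesis
    proof (cases "y \<le> c \<bullet> pt v")
      case True
      obtain w where w: "w \<in> closed_segment z1 (pt v)" "c \<bullet> w = y"
        using seg_ivt[OF "3.prems"(5) True] by blast
      have "closed_segment z1 (pt v) \<subseteq> ?S" using across(1) by (simp add: subset_closed_segment)
      with w(1) have "w \<in> ?S" by blast
      moreover have "se_le z1 w" "se_le w (pt v)"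
        using closed_segment_se_le[OF _ w(1)] S_le[OF across(1)] by auto
      moreover have "se_le w z2" using se_le_trans[OF \<open>se_le w (pt v)\<close> rest_ge[OF across(2)]] .
      ultimately show ?thesis using w(2) pts_uv by auto
    next
      case False
      obtain w where w: "w \<in> pts (v # r)" "se_le (pt v) w" "se_le w z2" "c \<bullet> w = y"
        using "3.IH"(2)[OF d v_in across(2) rest_ge[OF across(2)]] False "3.prems"(6) by auto
      have "se_le z1 w" using se_le_trans[OF conjunct2[OF S_le[OF across(1)]] w(2)] .
      then show ?thesis using w pts_uv by auto
    qed
  next
    case segment
    obtain w where w: "w \<in> closed_segment z1 z2" "c \<bullet> w = y"
      using seg_ivt[OF "3.prems"(5,6)] by blast
    have "closed_segment z1 z2 \<subseteq> ?S" using segment by (simp add: subset_closed_segment)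
    with w(1) have "w \<in> ?S" by blast
    moreover have "se_le z1 w" "se_le w z2" using closed_segment_se_le[OF "3.prems"(4) w(1)] by auto
    ultimately show ?thesis using w(2) pts_uv by auto
  qed
qed simp

lemma below_path_along_edge:
  assumes Q: "dpath E Q" and e: "e \<in> E" and apart: "seg e \<inter> pts Q = {}"
    and z: "z1 \<in> seg e" "z2 \<in> seg e" "se_le z1 z2"
    and below: "below_path \<alpha> \<beta> Q z1" and y2: "y2 \<in> pts Q" "fst y2 = fst z2"
  shows "below_path \<alpha> \<beta> Q z2"
proof (rule ccontr)
  assume not_below: "\<not> below_path \<alpha> \<beta> Q z2"
  obtain y1 where y1: "y1 \<in> pts Q" "fst y1 = fst z1" "snd z1 < snd y1"
    using below by (auto simp: below_path_def)
  have "y2 \<noteq> z2" using apart z(2) y2(1) by auto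
  then have y2_lt: "snd y2 < snd z2" using not_below y2 by (auto simp: below_path_def prod_eq_iff)
  have "se_le y1 y2" using y1 y2 z(3) y2_lt by (auto simp: se_le_def)
  moreover have "(0, -1) \<bullet> y1 \<le> - snd z2" "- snd z2 \<le> (0, -1) \<bullet> y2"
    using y1 y2_lt z(3) by (auto simp: se_le_def inner_prod_def)
  ultimately obtain w where w: "w \<in> pts Q" "se_le y1 w" "se_le w y2" "(0, -1) \<bullet> w = - snd z2"
    using path_points_ivt[OF Q y1(1) y2(1)] by blast
  have w_between: "fst z1 \<le> fst w" "fst w \<le> fst z2" "snd w = snd z2"
    using w y1 y2 by (auto simp: se_le_def inner_prod_def)
  have z_box: "se_le (pt (fst e)) z1" "se_le z1 (pt (snd e))" "se_le (pt (fst e)) z2" "se_le z2 (pt (snd e))"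
    using edge_seg_se_le[OF e] z(1,2) by auto
  have "w \<in> seg e"
  proof (cases "H_edge \<alpha> \<beta> e")
    case True
    then have "snd z1 = snd z2" using z_box by (auto simp: se_le_def H_edge_def)
    then have "w \<in> closed_segment z1 z2"
      using w_between by (intro closed_segment_axis_parallel) (auto simp: se_le_def)
    moreover have "closed_segment z1 z2 \<subseteq> seg e"
      using z(1,2) by (simp add: edge_seg_def subset_closed_segment)
    ultimately show ?thesis by blast
  next
    case False
    then have "fst z1 = fst z2" using edge_H_or_V[OF e] z_box by (auto simp: se_le_def V_edge_def)
    then have "w = z2" using w_between by (simp add: prod_eq_iff)
    then show ?thesis using z(2) by simp
  qed
  then show False using apart w(1) by auto
qed

lemma below_path_propagates:
  assumes "dpath E L" "\<forall>e\<in>set (edges_of L). seg e \<inter> pts Q = {}" "z \<in> pts L" "below_path \<alpha> \<beta> Q z"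
    "\<forall>a. fst z \<le> a \<and> a \<le> \<alpha> (last L) \<longrightarrow> (\<exists>y\<in>pts Q. fst y = a)" "dpath E Q"
  shows "below_path \<alpha> \<beta> Q (pt (last L))"
  using assms
proof (induction L arbitrary: z rule: induct_list012)
  case (2 u) then show ?case by (simp add: path_points_simps)
next
  case (3 u v r)
  have e: "(u, v) \<in> E" and d: "dpath E (v # r)" using "3.prems"(1) by auto
  have apart: "\<forall>e\<in>set (edges_of (v # r)). seg e \<inter> pts Q = {}" using "3.prems"(2) by simp
  have v_in: "pt v \<in> pts (v # r)" by (rule path_points_vertex) simp
  have v_last: "se_le (pt v) (pt (last (v # r)))" using path_points_se_le[OF d v_in] by simp
  show ?case
  proof (cases "z \<in> seg (u, v)")
    case True
    have zv: "se_le z (pt v)" using edge_seg_se_le[OF e True] by simp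
    obtain y where y: "y \<in> pts Q" "fst y = fst (pt v)"
      using "3.prems"(5) zv v_last by (auto simp: se_le_def)
    have "below_path \<alpha> \<beta> Q (pt v)"
      using below_path_along_edge[OF "3.prems"(6) e _ True _ zv "3.prems"(4) y] "3.prems"(2)
      by (simp add: edge_seg_def)
    moreover have "\<forall>a. fst (pt v) \<le> a \<and> a \<le> \<alpha> (last (v # r)) \<longrightarrow> (\<exists>y\<in>pts Q. fst y = a)"
      using "3.prems"(5) zv by (auto simp: se_le_def)
    ultimately show ?thesis using "3.IH"(2)[OF d apart v_in] "3.prems"(6) by simp
  next
    case False
    then have "z \<in> pts (v # r)" using "3.prems"(3) by (simp add: path_points_simps edge_seg_def)
    then show ?thesis using "3.IH"(2)[OF d apart] "3.prems"(4-6) by simp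
  qed
qed simp

lemma disjoint_lower_path_ends_lower:
  assumes P: "dpath E P" "standard_path \<alpha> \<beta> P" and Q: "dpath E Q" "standard_path \<alpha> \<beta> Q"
    and disjoint: "set P \<inter> set Q = {}" and ends: "\<alpha> (last P) = \<alpha> (last Q)"
    and lower: "lower_than \<alpha> \<beta> P Q"
  shows "\<beta> (last P) < \<beta> (last Q)"
proof -
  have lP: "2 \<le> length P" and lQ: "2 \<le> length Q" using standard_path_alpha_less P Q by auto
  have apart: "pts P \<inter> pts Q = {}" using disjoint_path_points[OF P(1) lP Q(1) lQ disjoint] .
  have ne: "P \<noteq> []" "Q \<noteq> []" using lP lQ by auto
  obtain z where z: "z \<in> pts P" "below_path \<alpha> \<beta> Q z" using lower by (auto simp: lower_than_iff)
  then obtain y where y: "y \<in> pts Q" "fst y = fst z" by (auto simp: below_path_def)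
  have tQ: "pt (last Q) \<in> pts Q" by (rule path_points_vertex[OF last_in_set[OF ne(2)]])
  have y_tQ: "se_le y (pt (last Q))" using path_points_se_le[OF Q(1) y(1)] by simp
  have columns: "\<forall>a. fst z \<le> a \<and> a \<le> \<alpha> (last P) \<longrightarrow> (\<exists>y\<in>pts Q. fst y = a)"
  proof (intro allI impI)
    fix a assume "fst z \<le> a \<and> a \<le> \<alpha> (last P)"
    then have "(1, 0) \<bullet> y \<le> a" "a \<le> (1, 0) \<bullet> pt (last Q)"
      using y(2) ends by (auto simp: inner_prod_def)
    from path_points_ivt[OF Q(1) y(1) tQ y_tQ this] obtain w where "w \<in> pts Q" "(1, 0) \<bullet> w = a"
      by blast
    then show "\<exists>y\<in>pts Q. fst y = a" by (auto simp: inner_prod_def)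
  qed
  have "\<forall>e\<in>set (edges_of P). seg e \<inter> pts Q = {}" using apart path_points_edge_seg by blast
  from below_path_propagates[OF P(1) this z columns Q(1)]
  obtain y' where y': "y' \<in> pts Q" "fst y' = \<alpha> (last P)" "\<beta> (last P) < snd y'"
    by (auto simp: below_path_def)
  show ?thesis
  proof (rule ccontr)
    assume "\<not> \<beta> (last P) < \<beta> (last Q)"
    then have "(0, -1) \<bullet> y' \<le> - \<beta> (last P)" "- \<beta> (last P) \<le> (0, -1) \<bullet> pt (last Q)"
      using y' by (auto simp: inner_prod_def)
    moreover have "se_le y' (pt (last Q))" using path_points_se_le[OF Q(1) y'(1)] by simp
    ultimately obtain w
      where w: "w \<in> pts Q" "se_le y' w" "se_le w (pt (last Q))" "(0, -1) \<bullet> w = - \<beta> (last P)"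
      using path_points_ivt[OF Q(1) y'(1) tQ] by blast
    then have "w = pt (last P)" using y'(2) ends by (auto simp: se_le_def inner_prod_def prod_eq_iff)
    moreover have "pt (last P) \<notin> pts Q" using apart path_points_vertex[OF last_in_set[OF ne(1)]] by blast
    ultimately show False using w(1) by simp
  qed
qed

end

section \<open>Weakly intersecting paths\<close>

context se_graph
begin

lemma common_source_not_lower:
  assumes P: "dpath E P" "standard_path \<alpha> \<beta> P" and Q: "dpath E Q" "standard_path \<alpha> \<beta> Q"
    and wi: "weakly_intersecting P Q" and source: "hd P = hd Q" "hd P \<in> R"
  shows "\<not> lower_than \<alpha> \<beta> P Q"
proof -
  have "2 \<le> length P" "2 \<le> length Q" using standard_path_alpha_less P Q by auto
  then obtain s v r v' r' where PQ: "P = s # v # r" "Q = s # v' # r'"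
    using source(1) by (cases P; cases "tl P"; cases Q; cases "tl Q") auto
  have e: "(s, v) \<in> E" "(s, v') \<in> E" using P(1) Q(1) PQ by auto
  have H: "H_edge \<alpha> \<beta> (s, v)" "H_edge \<alpha> \<beta> (s, v')" using source_edge_H e source(2) PQ by auto
  have "v' = v" using H_edges_common_source[OF e H] by simp
  then have "v \<in> {hd P, last P} \<inter> {hd Q, last Q}"
    using wi PQ by (auto simp: weakly_intersecting_def)
  moreover have "v \<noteq> s" using edge_pt_neq[OF e(1)] by auto
  ultimately have v_last: "last P = v" "last Q = v" using PQ by auto
  have row: "snd z = \<beta> s" if "dpath E p" "hd p = s" "last p = v" "z \<in> pts p" for p z
    using path_points_se_le[OF that(1,4)] that(2,3) H(1) by (auto simp: se_le_def H_edge_def)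
  show ?thesis
    using row[OF P(1) _ v_last(1)] row[OF Q(1) _ v_last(2)] PQ by (auto simp: lower_than_def)
qed

lemma lower_than_butlast:
  assumes ne: "P \<noteq> []" "Q \<noteq> []"
    and P: "dpath E (P @ [t])" and Q: "dpath E (Q @ [t])"
    and V: "V_edge \<alpha> \<beta> (last P, t)" and H: "H_edge \<alpha> \<beta> (last Q, t)"
    and lower: "lower_than \<alpha> \<beta> (P @ [t]) (Q @ [t])"
  shows "lower_than \<alpha> \<beta> P (Q @ [t])"
proof -
  have eP: "(last P, t) \<in> E" using P by (simp add: dpath_append_single[OF ne(1)])
  have dQ: "dpath E Q" and eQ: "(last Q, t) \<in> E" using Q by (simp_all add: dpath_append_single[OF ne(2)])
  obtain z y where zy: "z \<in> pts (P @ [t])" "y \<in> pts (Q @ [t])" "fst z = fst y" "snd z < snd y"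
    using lower by (auto simp: lower_than_def)
  have "z \<in> pts P"
  proof (rule ccontr)
    assume "z \<notin> pts P"
    then have "z \<in> closed_segment (pt (last P)) (pt t)"
      using zy(1) path_points_append_single[OF ne(1)] by auto
    from closed_segment_se_le[OF edge_se_le[OF eP] this]
    have z_col: "fst z = \<alpha> t" "\<beta> t \<le> snd z" using V by (auto simp: se_le_def V_edge_def)
    show False
    proof (cases "y \<in> pts Q")
      case True
      have "se_le y (pt (last Q))" using path_points_se_le[OF dQ True] by simp
      then show False using z_col zy(3) H by (auto simp: se_le_def H_edge_def)
    next
      case False
      then have "y \<in> closed_segment (pt (last Q)) (pt t)"
        using zy(2) path_points_append_single[OF ne(2)] by auto
      from closed_segment_se_le[OF edge_se_le[OF eQ] this]
      have "snd y = \<beta> t" using H by (auto simp: se_le_def H_edge_def)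
      then show False using z_col zy(4) by simp
    qed
  qed
  then show ?thesis using zy(2-4) by (auto simp: lower_than_def)
qed

end

context SE_graph_algebra
begin

text \<open>Exactly one of the two final edges into the common sink is horizontal.  If the lower
  path arrives vertically, its last edge starts above the sink, which
  \<open>disjoint_lower_path_ends_lower\<close> excludes.\<close>
lemma common_sink_q_commute:
  assumes P: "dpath E P" "standard_path \<alpha> \<beta> P" and Q: "dpath E Q" "standard_path \<alpha> \<beta> Q"
    and wi: "weakly_intersecting P Q" and sources: "hd P \<noteq> hd Q" and sink: "last P = last Q"
    and lower: "lower_than \<alpha> \<beta> P Q" and starts: "\<alpha> (hd P) = \<alpha> (hd Q) \<Longrightarrow> \<alpha> (hd P) = 0"
  shows "q_commute emb q (path_wt R \<alpha> \<beta> x xi P) (path_wt R \<alpha> \<beta> x xi Q) 1"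
proof -
  define t where "t = last P"
  have lP: "\<alpha> (hd P) < \<alpha> t" "2 \<le> length P"
    using standard_path_alpha_less[OF P] by (simp_all add: t_def)
  have lQ: "\<alpha> (hd Q) < \<alpha> t" "2 \<le> length Q"
    using standard_path_alpha_less[OF Q] sink by (simp_all add: t_def)
  obtain P' where P': "P = P' @ [t]" "P' \<noteq> []"
    using split_last_of_length_ge_2[OF lP(2)] by (auto simp: t_def)
  obtain Q' where Q': "Q = Q' @ [t]" "Q' \<noteq> []"
    using split_last_of_length_ge_2[OF lQ(2)] by (auto simp: t_def sink)
  have dP': "dpath E P'" "(last P', t) \<in> E" using P(1) P' by (simp_all add: dpath_append_single)
  have dQ': "dpath E Q'" "(last Q', t) \<in> E" using Q(1) Q' by (simp_all add: dpath_append_single)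
  have "hd P \<noteq> t" "hd Q \<noteq> t" using lP(1) lQ(1) by auto
  then have "set P \<inter> set Q = {t}"
    using wi sources sink unfolding weakly_intersecting_def t_def by auto
  moreover have "t \<notin> set P'" "t \<notin> set Q'"
    using dpath_distinct[OF P(1)] dpath_distinct[OF Q(1)] P'(1) Q'(1) by auto
  ultimately have disjoint: "set P' \<inter> set Q = {}" "set P \<inter> set Q' = {}" using P' Q' by auto
  have "last P' \<noteq> last Q'"
    using disjoint(1) Q'(1) last_in_set[OF P'(2)] last_in_set[OF Q'(2)] by auto
  then have "\<not> (H_edge \<alpha> \<beta> (last P', t) \<and> H_edge \<alpha> \<beta> (last Q', t) \<or>
      V_edge \<alpha> \<beta> (last P', t) \<and> V_edge \<alpha> \<beta> (last Q', t))"
    using aligned_edges_common_target[OF dP'(2) dQ'(2)] by blast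
  then consider "H_edge \<alpha> \<beta> (last P', t)" "V_edge \<alpha> \<beta> (last Q', t)"
    | "V_edge \<alpha> \<beta> (last P', t)" "H_edge \<alpha> \<beta> (last Q', t)"
    using edge_H_or_V dP'(2) dQ'(2) by blast
  then show ?thesis
  proof cases
    case 1
    have Q'_H: "\<not> H_edge \<alpha> \<beta> (last Q', t)" using 1(2) H_edge_not_V_edge by blast
    then have "last Q' \<notin> R" using source_edge_H[OF dQ'(2)] by auto
    then have "edge_wt R \<alpha> \<beta> x xi (last Q', t) = 1" using Q'_H by (simp add: edge_wt_def)
    then have weight: "path_wt R \<alpha> \<beta> x xi Q = path_wt R \<alpha> \<beta> x xi Q'"
      using path_wt_append_single[OF Q'(2), of R \<alpha> \<beta> x xi t] Q'(1) by simp
    have "standard_path \<alpha> \<beta> Q'"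
      using standard_path_butlast[OF Q'(2), of \<alpha> \<beta> t] Q(2) Q'(1) Q'_H by simp
    moreover have ends: "\<alpha> (last P) = \<alpha> (last Q')" and "\<beta> (last P) < \<beta> (last Q')"
      using 1(2) t_def by (auto simp: V_edge_def)
    moreover have "hd Q' = hd Q" using Q' by simp
    ultimately show ?thesis
      using disjoint_paths_q_commute[OF P dQ'(1) _ disjoint(2) ends] starts weight
      by (simp add: order_sign_def)
  next
    case 2
    have P'_H: "\<not> H_edge \<alpha> \<beta> (last P', t)" using 2(1) H_edge_not_V_edge by blast
    have "lower_than \<alpha> \<beta> P' Q"
      using lower_than_butlast[OF P'(2) Q'(2) _ _ 2] lower P(1) Q(1) P'(1) Q'(1) by simp
    moreover have "standard_path \<alpha> \<beta> P'"
      using standard_path_butlast[OF P'(2), of \<alpha> \<beta> t] P(2) P'(1) P'_H by simp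
    moreover have "\<alpha> (last P') = \<alpha> (last Q)" using 2(1) sink t_def by (simp add: V_edge_def)
    ultimately have "\<beta> (last P') < \<beta> (last Q)"
      using disjoint_lower_path_ends_lower[OF dP'(1) _ Q disjoint(1)] by blast
    then show ?thesis using 2(1) sink t_def by (simp add: V_edge_def)
  qed
qed

end

theorem lemmaA3:
  fixes V :: "'v set" and E :: "('v \<times> 'v) set" and R C :: "'v set"
    and \<alpha> \<beta> :: "'v \<Rightarrow> real"
    and q :: "'k::field" and emb :: "'k \<Rightarrow> 'a::ring_1"
    and x xi :: "'v \<Rightarrow> 'a"
    and P Q :: "'v list"
  assumes G: "SE_graph V E R C \<alpha> \<beta>"
    and emb_one: "emb 1 = 1"
    and emb_add: "\<And>a b. emb (a + b) = emb a + emb b"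
    and emb_mult: "\<And>a b. emb (a * b) = emb a * emb b"
    and emb_central: "\<And>a y. emb a * y = y * emb a"
    and q_nz: "q \<noteq> 0"
    and inv: "\<And>v. v \<in> V - R - C \<Longrightarrow> x v * xi v = 1 \<and> xi v * x v = 1"
    and rel: "LG_relations E (V - R - C) \<alpha> \<beta> (emb q) x"
    and P: "dpath E P" and Q: "dpath E Q"
    and stP: "standard_path \<alpha> \<beta> P" and stQ: "standard_path \<alpha> \<beta> Q"
    and wi: "weakly_intersecting P Q"
    and tt: "\<alpha> (last P) = \<alpha> (last Q)"
    and ss: "\<alpha> (hd P) \<noteq> \<alpha> (hd Q) \<or> (\<alpha> (hd P) = 0 \<and> \<alpha> (hd Q) = 0)"
    and low: "lower_than \<alpha> \<beta> P Q"
  shows "path_wt R \<alpha> \<beta> x xi P * path_wt R \<alpha> \<beta> x xi Q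
         = emb q * (path_wt R \<alpha> \<beta> x xi Q * path_wt R \<alpha> \<beta> x xi P)"
proof -
  interpret SE_graph_algebra V E R C \<alpha> \<beta> emb q x xi
    by unfold_locales (fact G emb_one emb_mult emb_central q_nz inv rel)+
  have starts: "\<alpha> (hd P) = \<alpha> (hd Q) \<Longrightarrow> \<alpha> (hd P) = 0" using ss by auto
  have lP: "\<alpha> (hd P) < \<alpha> (last P)" "2 \<le> length P" and lQ: "\<alpha> (hd Q) < \<alpha> (last Q)"
    using standard_path_alpha_less P Q stP stQ by auto
  have "q_commute emb q (path_wt R \<alpha> \<beta> x xi P) (path_wt R \<alpha> \<beta> x xi Q) 1"
  proof (cases "hd P = hd Q")
    case True
    have "P \<noteq> []" using lP(2) by auto
    then have "hd P \<in> V" using dpath_vertices_in_V[OF P lP(2)] hd_in_set by blast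
    then have "hd P \<in> R" using non_source_alpha_pos starts True by force
    then show ?thesis using common_source_not_lower[OF P stP Q stQ wi True] low by blast
  next
    case sources: False
    show ?thesis
    proof (cases "last P = last Q")
      case True
      then show ?thesis using common_sink_q_commute[OF P stP Q stQ wi sources _ low starts] by blast
    next
      case False
      then have disjoint: "set P \<inter> set Q = {}"
        using wi sources lP(1) lQ tt by (auto simp: weakly_intersecting_def)
      then have "\<beta> (last P) < \<beta> (last Q)"
        using disjoint_lower_path_ends_lower[OF P stP Q stQ _ tt low] by blast
      then show ?thesis
        using disjoint_paths_q_commute[OF P stP Q stQ disjoint tt starts] by (simp add: order_sign_def)
    qed
  qed
  then show ?thesis by (simp add: q_commute_def)
qed

end
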